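(* Let $c>0$, $D>0$, $k>0$, let $u$ be the solution and $u_L$ its truncation of degree $L\in\mathbb N$ as described in the context. Then there is a constant $C$ depending only on $c$, $D$, $k$ such that, uniformly over $\theta\in[0,\pi)$, $\varphi\in[0,2\pi)$, for all $t>0$, \[ \big(\mathbf{MSE}(u(\theta ,\varphi ,t)-u_L(\theta ,\varphi ,t))\big)^{1/2}=\|u(\theta ,\varphi ,t)-u_L(\theta ,\varphi ,t)\|_{L_2(\Omega)} \le C\left(\sum_{l=L}^{\infty }(2l+1)C_{l}\right)^{1/2}, \] and, for $L>\frac{\sqrt{D^{2}k^{2}+c^{2}}-Dk}{2Dk}$, \[ \|u(\theta ,\varphi ,t)-u_L(\theta ,\varphi ,t)\|_{L_2(\Omega)}\le C\exp\left( -\frac{c^{2}t}{2D}\right)\left(\sum_{l=L}^{\infty}(2l+1)C_{l}\right)^{1/2}, \] where $\mathbf{MSE}(u-u_L)=\mathbf{Var}(u-u_L)=\|u-u_L\|^2_{L_2(\Omega)}$.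
   Context: On the unit sphere with coordinates $(\theta,\varphi)$, $Y_{lm}(\theta,\varphi)=d_{lm}e^{im\varphi}P_l^m(\cos\theta)$, $d_{lm}=(-1)^m\big[\frac{(2l+1)(l-m)!}{4\pi(l+m)!}\big]^{1/2}$, are complex spherical harmonics; $\mathbf{0}$ denotes $\theta=\varphi=0$. $T=\sum_{l,m}a_{lm}Y_{lm}$ is a real Gaussian isotropic field with $a_{lm}$ complex Gaussian, $a_{lm}=(-1)^ma_{l,-m}$, $\mathbf E a_{lm}=0$, $\mathbf E a_{lm}\overline{a_{l'm'}}=\delta_l^{l'}\delta_m^{m'}C_l$, independent for $m\ne-m'$, and $\sum_l(2l+1)C_l<\infty$. The solution of $\frac{1}{c^2}u_{tt}+\frac1Du_t=k^2\Delta_{(\theta,\varphi)}u$, $u|_{t=0}=T$, $u_t|_{t=0}=0$, is $u(\theta,\varphi,t)=\exp(-\frac{c^2t}{2D})\sum_{l\ge0}\sum_{m=-l}^lY_{lm}(\theta,\varphi)\xi_{lm}(t)$ and its truncation is $u_L$, the same expression with $l$ restricted to $0\le l\le L-1$, where $\xi_{lm}(t)=\sqrt{\frac{4\pi}{2l+1}}a_{lm}\overline{Y_{l0}(\mathbf 0)}[A_l(t)+B_l(t)]$, $A_l(t)=[\cosh(tK_l)+\frac{c^2}{2DK_l}\sinh(tK_l)]\mathbf 1_{\{l\le l^*\}}$, $B_l(t)=[\cos(tK_l')+\frac{c^2}{2DK_l'}\sin(tK_l')]\mathbf 1_{\{l>l^*\}}$, $K_l=\sqrt{\frac{c^4}{4D^2}-c^2l(l+1)k^2}$,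 $K_l'=\sqrt{c^2l(l+1)k^2-\frac{c^4}{4D^2}}$, $l^*=\frac{\sqrt{D^2k^2+c^2}-Dk}{2Dk}$ (with $\sinh(tK_l)/K_l:=t$ if $K_l=0$). $\|X\|_{L_2(\Omega)}=(\mathbf E|X|^2)^{1/2}$. *)

theory Defs
  imports "HOL-Probability.Probability" "HOL-Computational_Algebra.Polynomial"
begin

(* Legendre polynomial via Rodrigues' formula:
   P_l(x) = 1/(2^l l!) d^l/dx^l (x^2-1)^l ; here we keep the polynomial (x^2-1)^l
   and differentiate it formally. *)
definition legendre_rodrigues_poly :: "nat \<Rightarrow> nat \<Rightarrow> real poly" where
  "legendre_rodrigues_poly l j = (pderiv ^^ j) ([:-1, 0, 1:] ^ l)"

(* Associated Legendre function P_l^m(x) for 0 <= m (no Condon-Shortley phase,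
   since the phase (-1)^m is contained in d_{lm}):
   P_l^m(x) = (1-x^2)^{m/2} d^m/dx^m P_l(x)
            = (1-x^2)^{m/2} / (2^l l!) d^{l+m}/dx^{l+m} (x^2-1)^l *)
definition assoc_legendre_nonneg :: "nat \<Rightarrow> nat \<Rightarrow> real \<Rightarrow> real" where
  "assoc_legendre_nonneg l m x =
     sqrt (1 - x\<^sup>2) ^ m * poly (legendre_rodrigues_poly l (l + m)) x / (2 ^ l * fact l)"

definition assoc_legendre :: "nat \<Rightarrow> int \<Rightarrow> real \<Rightarrow> real" where
  "assoc_legendre l m x =
     (if 0 \<le> m then assoc_legendre_nonneg l (nat m) x
      else (-1) ^ nat (-m) * fact (l - nat (-m)) / fact (l + nat (-m))
             * assoc_legendre_nonneg l (nat (-m)) x)"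

definition sph_const :: "nat \<Rightarrow> int \<Rightarrow> real" where
  "sph_const l m = (-1) ^ nat \<bar>m\<bar> *
     sqrt ((2 * real l + 1) * fact (nat (int l - m)) / (4 * pi * fact (nat (int l + m))))"

definition sph_harm :: "nat \<Rightarrow> int \<Rightarrow> real \<Rightarrow> real \<Rightarrow> complex" where
  "sph_harm l m \<theta> \<phi> =
     complex_of_real (sph_const l m) * cis (real_of_int m * \<phi>)
       * complex_of_real (assoc_legendre l m (cos \<theta>))"

definition lstar :: "real \<Rightarrow> real \<Rightarrow> real \<Rightarrow> real" where
  "lstar c D k = (sqrt (D\<^sup>2 * k\<^sup>2 + c\<^sup>2) - D * k) / (2 * D * k)"

definition Kl :: "real \<Rightarrow> real \<Rightarrow> real \<Rightarrow> nat \<Rightarrow> real" where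
  "Kl c D k l = sqrt (c ^ 4 / (4 * D\<^sup>2) - c\<^sup>2 * real l * (real l + 1) * k\<^sup>2)"

definition Kl' :: "real \<Rightarrow> real \<Rightarrow> real \<Rightarrow> nat \<Rightarrow> real" where
  "Kl' c D k l = sqrt (c\<^sup>2 * real l * (real l + 1) * k\<^sup>2 - c ^ 4 / (4 * D\<^sup>2))"

definition Al :: "real \<Rightarrow> real \<Rightarrow> real \<Rightarrow> nat \<Rightarrow> real \<Rightarrow> real" where
  "Al c D k l t =
     (if real l \<le> lstar c D k then
        cosh (t * Kl c D k l)
        + c\<^sup>2 / (2 * D) * (if Kl c D k l = 0 then t else sinh (t * Kl c D k l) / Kl c D k l)
      else 0)"

definition Bl :: "real \<Rightarrow> real \<Rightarrow> real \<Rightarrow> nat \<Rightarrow> real \<Rightarrow> real" where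
  "Bl c D k l t =
     (if real l > lstar c D k then
        cos (t * Kl' c D k l) + c\<^sup>2 / (2 * D * Kl' c D k l) * sin (t * Kl' c D k l)
      else 0)"

definition xi_coef :: "real \<Rightarrow> real \<Rightarrow> real \<Rightarrow> (nat \<Rightarrow> int \<Rightarrow> 'w \<Rightarrow> complex)
                        \<Rightarrow> nat \<Rightarrow> int \<Rightarrow> real \<Rightarrow> 'w \<Rightarrow> complex" where
  "xi_coef c D k a l m t \<omega> =
     complex_of_real (sqrt (4 * pi / (2 * real l + 1))) * a l m \<omega> * cnj (sph_harm l 0 0 0)
       * complex_of_real (Al c D k l t + Bl c D k l t)"

definition u_trunc :: "real \<Rightarrow> real \<Rightarrow> real \<Rightarrow> (nat \<Rightarrow> int \<Rightarrow> 'w \<Rightarrow> complex)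
                        \<Rightarrow> nat \<Rightarrow> real \<Rightarrow> real \<Rightarrow> real \<Rightarrow> 'w \<Rightarrow> complex" where
  "u_trunc c D k a L \<theta> \<phi> t \<omega> =
     complex_of_real (exp (- (c\<^sup>2 * t) / (2 * D))) *
       (\<Sum>l<L. \<Sum>m\<in>{- int l..int l}. sph_harm l m \<theta> \<phi> * xi_coef c D k a l m t \<omega>)"

definition centered_gaussian_rv :: "'w measure \<Rightarrow> ('w \<Rightarrow> real) \<Rightarrow> bool" where
  "centered_gaussian_rv M X \<longleftrightarrow>
     X \<in> borel_measurable M \<and>
     ((AE \<omega> in M. X \<omega> = 0) \<or> (\<exists>\<sigma>>0. distributed M lborel X (normal_density 0 \<sigma>)))"

definition jointly_gaussian_coeffs :: "'w measure \<Rightarrow> (nat \<Rightarrow> int \<Rightarrow> 'w \<Rightarrow> complex) \<Rightarrow> bool" where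
  "jointly_gaussian_coeffs M a \<longleftrightarrow>
     (\<forall>F (\<alpha> :: nat \<Rightarrow> int \<Rightarrow> real) (\<beta> :: nat \<Rightarrow> int \<Rightarrow> real).
        finite F \<longrightarrow> F \<subseteq> {(l, m). \<bar>m\<bar> \<le> int l} \<longrightarrow>
        centered_gaussian_rv M
          (\<lambda>\<omega>. \<Sum>(l, m)\<in>F. \<alpha> l m * Re (a l m \<omega>) + \<beta> l m * Im (a l m \<omega>)))"

definition isotropic_gaussian_coeffs ::
  "'w measure \<Rightarrow> (nat \<Rightarrow> int \<Rightarrow> 'w \<Rightarrow> complex) \<Rightarrow> (nat \<Rightarrow> real) \<Rightarrow> bool" where
  "isotropic_gaussian_coeffs M a C \<longleftrightarrow>
     prob_space M \<and>
     (\<forall>l m. \<bar>m\<bar> \<le> int l \<longrightarrow> a l m \<in> borel_measurable M) \<and>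
     (\<forall>l m. \<bar>m\<bar> \<le> int l \<longrightarrow> integrable M (\<lambda>\<omega>. (cmod (a l m \<omega>))\<^sup>2)) \<and>
     jointly_gaussian_coeffs M a \<and>
     (\<forall>l m \<omega>. \<bar>m\<bar> \<le> int l \<longrightarrow> a l (- m) \<omega> = (-1) ^ nat \<bar>m\<bar> * cnj (a l m \<omega>)) \<and>
     (\<forall>l m. \<bar>m\<bar> \<le> int l \<longrightarrow> (\<integral>\<omega>. a l m \<omega> \<partial>M) = 0) \<and>
     (\<forall>l m l' m'. \<bar>m\<bar> \<le> int l \<longrightarrow> \<bar>m'\<bar> \<le> int l' \<longrightarrow>
        (\<integral>\<omega>. a l m \<omega> * cnj (a l' m' \<omega>) \<partial>M) = (if l = l' \<and> m = m' then complex_of_real (C l) else 0)) \<and>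
     (\<forall>l m l' m'. \<bar>m\<bar> \<le> int l \<longrightarrow> \<bar>m'\<bar> \<le> int l' \<longrightarrow>
        (l, m) \<noteq> (l', m') \<longrightarrow> (l, m) \<noteq> (l', - m') \<longrightarrow>
        prob_space.indep_var M borel (a l m) borel (a l' m')) \<and>
     summable (\<lambda>l. (2 * real l + 1) * C l)"

end

theory Submission
  imports Defs
begin

(* The truncation error is the L2(Omega) limit of the increments u_N - u_L, which are finite sums of
   the uncorrelated coefficients a_lm over the modes L <= l < N, |m| <= l, weighted by Y_lm(theta, phi).
   Unsold's theorem sum_m |Y_lm|^2 = (2l+1)/(4 pi) therefore gives
     E |u_N - u_L|^2 = sum_{L <= l < N} (exp (-c^2 t/(2D)) (A_l(t) + B_l(t)))^2 (2l+1)/(4 pi) C_l,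
   and it remains to bound the damped time factor uniformly in l and t > 0.  For the finitely many
   overdamped modes l <= l^* we have 0 <= K_l <= c^2/(2D), hence exp (-c^2 t/(2D)) cosh (t K_l) <= 1 and
   exp (-c^2 t/(2D)) sinh (t K_l)/K_l <= 1/(2 K_l).  For the underdamped modes l > l^* we have
   |A_l + B_l| <= 1 + c^2/(2D K'_l) with K'_l increasing in l; since this bound does not use the
   damping, the factor exp (-c^2 t/(2D)) survives when L > l^*. *)

section \<open>Rodrigues polynomials and Unsold's theorem\<close>

lemma legendre_rodrigues_poly_0: "legendre_rodrigues_poly l 0 = [:-1, 0, 1:] ^ l"
  by (simp add: legendre_rodrigues_poly_def)

lemma pderiv_legendre_rodrigues_poly:
  "pderiv (legendre_rodrigues_poly l j) = legendre_rodrigues_poly l (Suc j)"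
  by (simp add: legendre_rodrigues_poly_def)

lemma pderiv_mult_x2_minus_1:
  "pderiv ([:-1, 0, 1:] * p) = [:-1, 0, 1:] * pderiv p + smult 2 ([:0, 1:] * p)" for p :: "real poly"
  unfolding pderiv_mult by (simp add: pderiv_pCons poly_eq_poly_eq_iff[symmetric] fun_eq_iff)

lemma pderiv_mult_x: "pderiv ([:0, 1:] * p) = [:0, 1:] * pderiv p + p" for p :: "real poly"
  by (simp add: pderiv_mult pderiv_pCons)

lemma legendre_rodrigues_poly_ode:
  "[:-1, 0, 1:] * legendre_rodrigues_poly l 1 = smult (2 * real l) ([:0, 1:] * legendre_rodrigues_poly l 0)"
proof (cases l)
  case (Suc n)
  have "pderiv ([:-1, 0, 1:] ^ Suc n) = smult (real (Suc n)) ([:-1, 0, 1:] ^ n) * [:0, 2:]"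
    by (simp only: pderiv_power_Suc) (simp add: pderiv_pCons)
  then show ?thesis
    by (simp add: Suc legendre_rodrigues_poly_def poly_eq_poly_eq_iff[symmetric] fun_eq_iff algebra_simps)
qed (simp add: legendre_rodrigues_poly_def)

lemma legendre_rodrigues_poly_recurrence:
  "[:-1, 0, 1:] * legendre_rodrigues_poly l (n + 2)
     + smult (2 * (real n + 1 - real l)) ([:0, 1:] * legendre_rodrigues_poly l (n + 1))
     + smult ((real n + 1) * (real n - 2 * real l)) (legendre_rodrigues_poly l n) = 0"
proof (induction n)
  case 0
  from arg_cong[OF legendre_rodrigues_poly_ode, of pderiv] show ?case
    unfolding pderiv_smult pderiv_mult_x2_minus_1 pderiv_mult_x pderiv_legendre_rodrigues_poly
    by (simp add: poly_eq_poly_eq_iff[symmetric] fun_eq_iff numeral_2_eq_2 algebra_simps)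
next
  case (Suc n)
  from arg_cong[OF Suc.IH, of pderiv] show ?case
    unfolding pderiv_add pderiv_smult pderiv_mult_x2_minus_1 pderiv_mult_x pderiv_legendre_rodrigues_poly
    by (simp add: poly_eq_poly_eq_iff[symmetric] fun_eq_iff algebra_simps)
qed

lemma pderiv_power_linear_mult:
  "pderiv ([:-a, 1:] ^ Suc n * f) = [:-a, 1:] ^ n * (smult (of_nat (Suc n)) f + [:-a, 1:] * pderiv f)"
  for f :: "'a :: field_char_0 poly"
  by (simp only: pderiv_mult pderiv_power_Suc) (simp add: pderiv_pCons algebra_simps)

lemma poly_higher_pderiv_at_root:
  fixes f :: "'a :: field_char_0 poly"
  shows "j < n \<Longrightarrow> poly ((pderiv ^^ j) ([:-a, 1:] ^ n * f)) a = 0"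
    and "poly ((pderiv ^^ n) ([:-a, 1:] ^ n * f)) a = fact n * poly f a"
proof -
  have claim: "(j < n \<longrightarrow> poly ((pderiv ^^ j) ([:-a, 1:] ^ n * f)) a = 0) \<and>
        (j = n \<longrightarrow> poly ((pderiv ^^ j) ([:-a, 1:] ^ n * f)) a = fact n * poly f a)" for j
  proof (induction n arbitrary: f j)
    case (Suc n)
    show ?case
    proof (cases j)
      case (Suc i)
      define g where "g = smult (of_nat (Suc n)) f + [:-a, 1:] * pderiv f"
      have shift: "(pderiv ^^ j) ([:-a, 1:] ^ Suc n * f) = (pderiv ^^ i) ([:-a, 1:] ^ n * g)"
        by (simp only: g_def Suc funpow_Suc_right o_apply pderiv_power_linear_mult)
      have "poly g a = of_nat (Suc n) * poly f a"
        by (simp add: g_def)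
      then show ?thesis
        unfolding shift using Suc.IH[of i g] Suc by (simp add: mult_ac)
    qed simp
  qed simp
  from claim[of j] claim[of n] show "j < n \<Longrightarrow> poly ((pderiv ^^ j) ([:-a, 1:] ^ n * f)) a = 0"
    and "poly ((pderiv ^^ n) ([:-a, 1:] ^ n * f)) a = fact n * poly f a"
    by simp_all
qed

lemma degree_legendre_rodrigues_poly: "degree (legendre_rodrigues_poly l j) = 2 * l - j"
proof (induction j)
  case 0
  have "degree ([:-1, 0, 1 :: real:] ^ l) = l * degree [:-1, 0, 1 :: real:]"
    by (rule degree_power_eq) simp
  then show ?case by (simp add: legendre_rodrigues_poly_0)
next
  case (Suc j)
  then show ?case by (simp flip: pderiv_legendre_rodrigues_poly add: degree_pderiv)
qed

lemma legendre_rodrigues_poly_vanish: "legendre_rodrigues_poly l (Suc (2 * l)) = 0"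
  using degree_legendre_rodrigues_poly[of l "2 * l"]
  by (simp flip: pderiv_legendre_rodrigues_poly add: pderiv_eq_0_iff)

lemma x2_minus_1_power_factor: "[:-1, 0, 1 :: real:] ^ l = [:-1, 1:] ^ l * [:1, 1:] ^ l"
  by (simp flip: power_mult_distrib)

lemma poly_legendre_rodrigues_poly_at_1:
  "poly (legendre_rodrigues_poly l l) 1 = 2 ^ l * fact l"
  "j < l \<Longrightarrow> poly (legendre_rodrigues_poly l j) 1 = 0"
  using poly_higher_pderiv_at_root(1)[of j l 1 "[:1, 1:] ^ l :: real poly"]
    poly_higher_pderiv_at_root(2)[of l 1 "[:1, 1:] ^ l :: real poly"]
  by (simp_all add: legendre_rodrigues_poly_def x2_minus_1_power_factor poly_power)

(* By Rodrigues' formula, 2^l l! times the j-th derivative of the Legendre polynomial P_l. *)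
definition rodrigues_deriv :: "nat \<Rightarrow> nat \<Rightarrow> real \<Rightarrow> real" where
  "rodrigues_deriv l j x = poly (legendre_rodrigues_poly l (l + j)) x"

lemma rodrigues_deriv_has_derivative:
  "(rodrigues_deriv l j has_real_derivative rodrigues_deriv l (Suc j) x) (at x)"
  unfolding rodrigues_deriv_def[abs_def]
  using poly_DERIV[of "legendre_rodrigues_poly l (l + j)" x] by (simp add: pderiv_legendre_rodrigues_poly)

lemma rodrigues_deriv_vanish: "rodrigues_deriv l (Suc l) x = 0"
  using legendre_rodrigues_poly_vanish[of l] by (simp add: rodrigues_deriv_def mult_2)

lemma rodrigues_deriv_recurrence:
  "(1 - x\<^sup>2) * rodrigues_deriv l (j + 2) x
     = 2 * (real j + 1) * x * rodrigues_deriv l (j + 1) x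
       - (real l + real j + 1) * (real l - real j) * rodrigues_deriv l j x"
  using arg_cong[OF legendre_rodrigues_poly_recurrence[of l "l + j"], of "\<lambda>p. poly p x"]
  by (simp add: rodrigues_deriv_def algebra_simps power2_eq_square)

lemma fact_ratio_Suc:
  assumes "n < l"
  shows "fact (l - n) / fact (l + n)
    = fact (l - Suc n) / fact (l + Suc n) * ((real l - real n) * (real l + real n + 1))"
proof -
  have split_l_minus_n: "fact (l - n) = (real l - real n) * (fact (l - Suc n) :: real)"
    using assms by (simp add: Suc_diff_Suc[symmetric] of_nat_diff)
  have split_l_plus_Suc_n: "fact (l + Suc n) = (real l + real n + 1) * (fact (l + n) :: real)"
    by (simp add: algebra_simps)
  have "real l + real n + 1 > 0"
    by simp
  then show ?thesis
    unfolding split_l_minus_n split_l_plus_Suc_n by simp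
qed

lemma weighted_rodrigues_deriv_has_derivative:
  "((\<lambda>x. (1 - x\<^sup>2) ^ j * (rodrigues_deriv l j x)\<^sup>2) has_real_derivative
      2 * (1 - x\<^sup>2) ^ j * rodrigues_deriv l j x * rodrigues_deriv l (Suc j) x
      - 2 * real j * x * (1 - x\<^sup>2) ^ (j - 1) * (rodrigues_deriv l j x)\<^sup>2) (at x)"
  by (rule derivative_eq_intros rodrigues_deriv_has_derivative refl)+
    (simp add: algebra_simps)

lemma rodrigues_deriv_telescoping:
  assumes "n \<le> l"
  shows "(\<Sum>j\<le>n. fact (l - j) / fact (l + j) *
            (2 * (1 - x\<^sup>2) ^ j * rodrigues_deriv l j x * rodrigues_deriv l (Suc j) x
             - 2 * real j * x * (1 - x\<^sup>2) ^ (j - 1) * (rodrigues_deriv l j x)\<^sup>2))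
    = rodrigues_deriv l 0 x * rodrigues_deriv l 1 x
      + fact (l - n) / fact (l + n) * (1 - x\<^sup>2) ^ n * rodrigues_deriv l n x * rodrigues_deriv l (Suc n) x"
  using assms
proof (induction n)
  case (Suc n)
  define w :: real where "w = fact (l - Suc n) / fact (l + Suc n)"
  let ?Q = "rodrigues_deriv l"
  have "fact (l - Suc n) / fact (l + Suc n) *
          (2 * (1 - x\<^sup>2) ^ Suc n * ?Q (Suc n) x * ?Q (Suc (Suc n)) x
           - 2 * real (Suc n) * x * (1 - x\<^sup>2) ^ (Suc n - 1) * (?Q (Suc n) x)\<^sup>2)
      = w * (1 - x\<^sup>2) ^ n * ?Q (Suc n) x * ((1 - x\<^sup>2) * ?Q (n + 2) x - 2 * (real n + 1) * x * ?Q (n + 1) x)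
        + w * (1 - x\<^sup>2) ^ Suc n * ?Q (Suc n) x * ?Q (Suc (Suc n)) x" (is "?last = _")
    unfolding w_def[symmetric] by (simp add: algebra_simps power2_eq_square)
  also have "\<dots> = - (w * ((real l - real n) * (real l + real n + 1))) * (1 - x\<^sup>2) ^ n * ?Q (Suc n) x * ?Q n x
        + w * (1 - x\<^sup>2) ^ Suc n * ?Q (Suc n) x * ?Q (Suc (Suc n)) x"
    unfolding rodrigues_deriv_recurrence by (simp add: algebra_simps)
  also have "\<dots> = - (fact (l - n) / fact (l + n)) * (1 - x\<^sup>2) ^ n * ?Q (Suc n) x * ?Q n x
        + w * (1 - x\<^sup>2) ^ Suc n * ?Q (Suc n) x * ?Q (Suc (Suc n)) x" (is "_ = ?telescoped")
    using fact_ratio_Suc[of n l] Suc.prems by (simp add: w_def)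
  finally have last_term: "?last = ?telescoped" .
  from Suc show ?case
    unfolding sum.atMost_Suc last_term by (simp add: w_def algebra_simps)
qed simp

(* At x = cos theta this is (4 pi / (2l+1)) (2^l l!)^2 sum_m |Y_lm(theta, phi)|^2.  Its derivative
   telescopes to 0, and its value at x = 1 is (2^l l!)^2: this is Unsold's theorem. *)
definition unsold_form :: "nat \<Rightarrow> real \<Rightarrow> real" where
  "unsold_form l x =
     2 * (\<Sum>j\<le>l. fact (l - j) / fact (l + j) * ((1 - x\<^sup>2) ^ j * (rodrigues_deriv l j x)\<^sup>2))
     - (rodrigues_deriv l 0 x)\<^sup>2"

lemma unsold_form_has_derivative: "(unsold_form l has_real_derivative 0) (at x)"
proof -
  have "((\<lambda>x. \<Sum>j\<le>l. fact (l - j) / fact (l + j) * ((1 - x\<^sup>2) ^ j * (rodrigues_deriv l j x)\<^sup>2))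
      has_real_derivative (\<Sum>j\<le>l. fact (l - j) / fact (l + j) *
            (2 * (1 - x\<^sup>2) ^ j * rodrigues_deriv l j x * rodrigues_deriv l (Suc j) x
             - 2 * real j * x * (1 - x\<^sup>2) ^ (j - 1) * (rodrigues_deriv l j x)\<^sup>2))) (at x)"
    by (intro DERIV_sum DERIV_cmult weighted_rodrigues_deriv_has_derivative)
  from DERIV_diff[OF DERIV_cmult[OF this, of 2] DERIV_power[OF rodrigues_deriv_has_derivative[of l 0 x], where n=2]]
  have "(unsold_form l has_real_derivative
      2 * (\<Sum>j\<le>l. fact (l - j) / fact (l + j) *
            (2 * (1 - x\<^sup>2) ^ j * rodrigues_deriv l j x * rodrigues_deriv l (Suc j) x
             - 2 * real j * x * (1 - x\<^sup>2) ^ (j - 1) * (rodrigues_deriv l j x)\<^sup>2))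
      - 2 * rodrigues_deriv l 0 x * rodrigues_deriv l 1 x) (at x)"
    by (simp add: unsold_form_def[abs_def] mult_ac)
  then show ?thesis
    unfolding rodrigues_deriv_telescoping[OF order_refl] by (simp add: rodrigues_deriv_vanish)
qed

lemma unsold_form_eq: "unsold_form l x = (2 ^ l * fact l)\<^sup>2"
proof -
  have "unsold_form l x = unsold_form l 1"
    using DERIV_isconst_all unsold_form_has_derivative by blast
  also have "\<dots> = (2 ^ l * fact l)\<^sup>2"
    by (simp add: unsold_form_def sum.atMost_shift rodrigues_deriv_def poly_legendre_rodrigues_poly_at_1)
  finally show ?thesis .
qed

lemma sum_int_interval_nat_abs:
  fixes f :: "nat \<Rightarrow> 'a :: ring_1"
  shows "(\<Sum>m\<in>{- int l..int l}. f (nat \<bar>m\<bar>)) = 2 * (\<Sum>j\<le>l. f j) - f 0"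
proof -
  have split: "{- int l..int l} = int ` {..l} \<union> (\<lambda>j. - int j) ` {1..l}"
  proof (intro set_eqI iffI)
    fix m assume "m \<in> {- int l..int l}"
    then show "m \<in> int ` {..l} \<union> (\<lambda>j. - int j) ` {1..l}"
      by (cases "m \<ge> 0") (auto intro!: image_eqI[of _ _ "nat \<bar>m\<bar>"])
  qed auto
  have "(\<Sum>m\<in>{- int l..int l}. f (nat \<bar>m\<bar>)) = (\<Sum>j\<le>l. f j) + (\<Sum>j\<in>{1..l}. f j)"
    unfolding split by (subst sum.union_disjoint) (auto simp: sum.reindex inj_on_def)
  also have "(\<Sum>j\<in>{1..l}. f j) = (\<Sum>j\<le>l. f j) - f 0"
    using sum.atMost_shift[of f l] by (simp add: atLeast1_atMost_eq_remove0 sum_diff1)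
  finally show ?thesis
    by (simp add: mult_2)
qed

lemma norm_sph_harm_sq:
  assumes "\<bar>m\<bar> \<le> int l"
  defines "j \<equiv> nat \<bar>m\<bar>"
  shows "(cmod (sph_harm l m \<theta> \<phi>))\<^sup>2 = (2 * real l + 1) / (4 * pi) *
    (fact (l - j) / fact (l + j) * ((1 - (cos \<theta>)\<^sup>2) ^ j * (rodrigues_deriv l j (cos \<theta>))\<^sup>2))
      / (2 ^ l * fact l)\<^sup>2"
proof -
  have "j \<le> l" "(cos \<theta>)\<^sup>2 \<le> 1"
    using assms abs_cos_le_one[of \<theta>] by (auto simp: abs_square_le_1)
  have "(sqrt (1 - (cos \<theta>)\<^sup>2) ^ j)\<^sup>2 = (sqrt (1 - (cos \<theta>)\<^sup>2))\<^sup>2 ^ j"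
    by (metis power_mult mult.commute)
  with \<open>(cos \<theta>)\<^sup>2 \<le> 1\<close> have legendre_sq: "(assoc_legendre_nonneg l j (cos \<theta>))\<^sup>2
      = (1 - (cos \<theta>)\<^sup>2) ^ j * (rodrigues_deriv l j (cos \<theta>))\<^sup>2 / (2 ^ l * fact l)\<^sup>2"
    by (simp add: assoc_legendre_nonneg_def rodrigues_deriv_def power_mult_distrib power_divide)
  have sign_sq: "((- 1 :: real) ^ n)\<^sup>2 = 1" for n
    by (simp add: power2_eq_square flip: power_mult_distrib)
  have "(cmod (sph_harm l m \<theta> \<phi>))\<^sup>2 = (sph_const l m)\<^sup>2 * (assoc_legendre l m (cos \<theta>))\<^sup>2"
    by (simp add: sph_harm_def norm_mult power_mult_distrib)
  also have "(sph_const l m)\<^sup>2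
      = (2 * real l + 1) / (4 * pi) * (fact (nat (int l - m)) / fact (nat (int l + m)))"
    by (simp add: sph_const_def power_mult_distrib sign_sq)
  finally have norm_sq: "(cmod (sph_harm l m \<theta> \<phi>))\<^sup>2 = (2 * real l + 1) / (4 * pi)
      * (fact (nat (int l - m)) / fact (nat (int l + m))) * (assoc_legendre l m (cos \<theta>))\<^sup>2" .
  show ?thesis
  proof (cases "m \<ge> 0")
    case True
    then have "nat (int l - m) = l - j" "nat (int l + m) = l + j" "assoc_legendre l m = assoc_legendre_nonneg l j"
      using \<open>j \<le> l\<close> by (auto simp: j_def assoc_legendre_def)
    then show ?thesis
      by (simp add: norm_sq legendre_sq)
  next
    case False
    then have indices: "nat (int l - m) = l + j" "nat (int l + m) = l - j"
      and assoc_sq: "(assoc_legendre l m (cos \<theta>))\<^sup>2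
             = (fact (l - j) / fact (l + j))\<^sup>2 * (assoc_legendre_nonneg l j (cos \<theta>))\<^sup>2"
      using \<open>j \<le> l\<close> by (auto simp: j_def assoc_legendre_def power_mult_distrib power_divide sign_sq)
    show ?thesis
      unfolding norm_sq indices assoc_sq legendre_sq by (simp add: field_simps power2_eq_square)
  qed
qed

theorem sum_norm_sph_harm_sq:
  "(\<Sum>m\<in>{- int l..int l}. (cmod (sph_harm l m \<theta> \<phi>))\<^sup>2) = (2 * real l + 1) / (4 * pi)"
proof -
  define T where "T j = fact (l - j) / fact (l + j)
      * ((1 - (cos \<theta>)\<^sup>2) ^ j * (rodrigues_deriv l j (cos \<theta>))\<^sup>2)" for j
  have "(\<Sum>m\<in>{- int l..int l}. (cmod (sph_harm l m \<theta> \<phi>))\<^sup>2)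
      = (\<Sum>m\<in>{- int l..int l}. (2 * real l + 1) / (4 * pi) * T (nat \<bar>m\<bar>) / (2 ^ l * fact l)\<^sup>2)"
    by (intro sum.cong refl) (auto simp: norm_sph_harm_sq T_def)
  also have "\<dots> = (2 * real l + 1) / (4 * pi) / (2 ^ l * fact l)\<^sup>2 * (\<Sum>m\<in>{- int l..int l}. T (nat \<bar>m\<bar>))"
    by (simp add: sum_distrib_left)
  also have "(\<Sum>m\<in>{- int l..int l}. T (nat \<bar>m\<bar>)) = unsold_form l (cos \<theta>)"
    unfolding sum_int_interval_nat_abs by (simp add: unsold_form_def T_def)
  also have "(2 * real l + 1) / (4 * pi) / (2 ^ l * fact l)\<^sup>2 * unsold_form l (cos \<theta>)
      = (2 * real l + 1) / (4 * pi)"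
    by (simp add: unsold_form_eq)
  finally show ?thesis .
qed

lemma sph_harm_north_pole: "sph_harm l 0 0 0 = sqrt ((2 * real l + 1) / (4 * pi))"
  by (simp add: sph_harm_def sph_const_def assoc_legendre_def assoc_legendre_nonneg_def
      poly_legendre_rodrigues_poly_at_1)

section \<open>The damped time factor\<close>

lemma lstar_pos:
  assumes "c > 0" "D > 0" "k > 0"
  shows "lstar c D k > 0"
proof -
  have "D * k < sqrt (D\<^sup>2 * k\<^sup>2 + c\<^sup>2)"
    using assms by (intro real_less_rsqrt) (simp add: power_mult_distrib)
  then show ?thesis
    using assms by (simp add: lstar_def)
qed

lemma lstar_mult_Suc:
  assumes "c > 0" "D > 0" "k > 0"
  shows "lstar c D k * (lstar c D k + 1) = c\<^sup>2 / (4 * D\<^sup>2 * k\<^sup>2)"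
proof -
  define s where "s = sqrt (D\<^sup>2 * k\<^sup>2 + c\<^sup>2)"
  have "lstar c D k * (lstar c D k + 1) = (s - D * k) / (2 * D * k) * ((s + D * k) / (2 * D * k))"
    using assms by (simp add: lstar_def s_def field_simps)
  also have "\<dots> = (s\<^sup>2 - (D * k)\<^sup>2) / (2 * D * k)\<^sup>2"
    by (simp add: power2_eq_square algebra_simps)
  also have "\<dots> = c\<^sup>2 / (4 * D\<^sup>2 * k\<^sup>2)"
    by (simp add: s_def power_mult_distrib)
  finally show ?thesis .
qed

lemma le_lstar_iff:
  assumes "c > 0" "D > 0" "k > 0"
  shows "c\<^sup>2 * real l * (real l + 1) * k\<^sup>2 \<le> c ^ 4 / (4 * D\<^sup>2) \<longleftrightarrow> real l \<le> lstar c D k"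
proof -
  have "c ^ 4 / (4 * D\<^sup>2) = (c\<^sup>2 * k\<^sup>2) * (lstar c D k * (lstar c D k + 1))"
    unfolding lstar_mult_Suc[OF assms] using assms by (simp add: field_simps power2_eq_square eval_nat_numeral)
  then have "c\<^sup>2 * real l * (real l + 1) * k\<^sup>2 \<le> c ^ 4 / (4 * D\<^sup>2)
      \<longleftrightarrow> (c\<^sup>2 * k\<^sup>2) * (real l * (real l + 1)) \<le> (c\<^sup>2 * k\<^sup>2) * (lstar c D k * (lstar c D k + 1))"
    by (simp add: mult_ac)
  also have "\<dots> \<longleftrightarrow> real l * (real l + 1) \<le> lstar c D k * (lstar c D k + 1)"
    using assms by (intro mult_le_cancel_left_pos) simp
  also have "\<dots> \<longleftrightarrow> real l \<le> lstar c D k"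
    using lstar_pos[OF assms]
    by (smt (verit, best) mult_mono mult_strict_mono of_nat_0_le_iff)
  finally show ?thesis .
qed

lemma Kl_bounds:
  assumes "c > 0" "D > 0" "k > 0" "real l \<le> lstar c D k"
  shows "0 \<le> Kl c D k l" "Kl c D k l \<le> c\<^sup>2 / (2 * D)"
proof -
  have "c\<^sup>2 * real l * (real l + 1) * k\<^sup>2 \<le> c ^ 4 / (4 * D\<^sup>2)"
    using le_lstar_iff[OF assms(1-3)] assms(4) by simp
  then show "0 \<le> Kl c D k l"
    by (simp add: Kl_def)
  have "Kl c D k l \<le> sqrt (c ^ 4 / (4 * D\<^sup>2))"
    unfolding Kl_def by (rule real_sqrt_le_mono) simp
  also have "c ^ 4 / (4 * D\<^sup>2) = (c\<^sup>2 / (2 * D))\<^sup>2"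
    by (simp add: power_divide power_mult_distrib flip: power_mult)
  finally show "Kl c D k l \<le> c\<^sup>2 / (2 * D)"
    using assms by simp
qed

lemma Kl'_pos:
  assumes "c > 0" "D > 0" "k > 0" "real l > lstar c D k"
  shows "Kl' c D k l > 0"
  using le_lstar_iff[OF assms(1-3), of l] assms(4) by (simp add: Kl'_def)

lemma Kl'_mono:
  assumes "l' \<le> l"
  shows "Kl' c D k l' \<le> Kl' c D k l"
proof -
  have "real l' * (real l' + 1) \<le> real l * (real l + 1)"
    using assms by (intro mult_mono) auto
  then have "c\<^sup>2 * k\<^sup>2 * (real l' * (real l' + 1)) \<le> c\<^sup>2 * k\<^sup>2 * (real l * (real l + 1))"
    by (intro mult_left_mono) auto
  then show ?thesis
    unfolding Kl'_def by (intro real_sqrt_le_mono) (simp add: mult_ac)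
qed

lemma mult_exp_neg_le_1: "x * exp (- x) \<le> (1 :: real)"
proof -
  have "x \<le> exp x"
    using exp_ge_add_one_self[of x] by linarith
  then show ?thesis
    by (simp add: exp_minus field_simps)
qed

lemma exp_neg_mult_cosh_le_1:
  assumes "0 \<le> K" "K \<le> a" "0 \<le> t"
  shows "exp (- (a * t)) * cosh (t * K) \<le> (1 :: real)"
proof -
  have "cosh (t * K) \<le> exp (t * K)"
    using assms by (simp add: cosh_def)
  then have "exp (- (a * t)) * cosh (t * K) \<le> exp (t * K - a * t)"
    by (simp add: exp_diff exp_minus field_simps)
  also have "\<dots> \<le> 1"
    using mult_left_mono[OF assms(2,3)] by (simp add: mult.commute)
  finally show ?thesis .
qed

lemma exp_neg_mult_sinh_le:
  assumes "0 < K" "K \<le> a" "0 \<le> t"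
  shows "exp (- (a * t)) * (sinh (t * K) / K) \<le> 1 / (2 * K :: real)"
proof -
  have "sinh (t * K) \<le> exp (t * K) / 2"
    by (simp add: sinh_def)
  then have "exp (- (a * t)) * (sinh (t * K) / K) \<le> exp (t * K - a * t) / (2 * K)"
    using assms by (simp add: exp_diff exp_minus field_simps)
  also have "\<dots> \<le> 1 / (2 * K)"
    using assms mult_left_mono[OF assms(2,3)] by (intro divide_right_mono) (simp_all add: mult.commute)
  finally show ?thesis .
qed

(* The summand 2 covers the cosh part and, for K_l = 0 (where the division yields 0), the bound
   (c^2 t/(2D)) exp (-c^2 t/(2D)) <= 1. *)
definition time_factor_bound :: "real \<Rightarrow> real \<Rightarrow> real \<Rightarrow> real" where
  "time_factor_bound c D k =
     2 + (\<Sum>l\<le>nat \<lfloor>lstar c D k\<rfloor>. c\<^sup>2 / (2 * D) / (2 * Kl c D k l))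
       + c\<^sup>2 / (2 * D) / Kl' c D k (Suc (nat \<lfloor>lstar c D k\<rfloor>))"

lemma time_factor_bound_ge:
  assumes "c > 0" "D > 0" "k > 0"
  shows "real l \<le> lstar c D k \<Longrightarrow> 2 + c\<^sup>2 / (2 * D) / (2 * Kl c D k l) \<le> time_factor_bound c D k"
    and "real l > lstar c D k \<Longrightarrow> 1 + c\<^sup>2 / (2 * D) / Kl' c D k l \<le> time_factor_bound c D k"
proof -
  let ?l0 = "nat \<lfloor>lstar c D k\<rfloor>"
  have low: "real l \<le> lstar c D k \<longleftrightarrow> l \<le> ?l0" for l
    using lstar_pos[OF assms] by linarith
  have terms_nonneg: "0 \<le> c\<^sup>2 / (2 * D) / (2 * Kl c D k l)" if "l \<in> {..?l0}" for l
    using that Kl_bounds(1)[OF assms, of l] assms by (simp add: low)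
  have first_Kl'_pos: "Kl' c D k (Suc ?l0) > 0"
    using assms low[of "Suc ?l0"] by (intro Kl'_pos) auto
  then have last_nonneg: "0 \<le> c\<^sup>2 / (2 * D) / Kl' c D k (Suc ?l0)"
    using assms by simp
  show "2 + c\<^sup>2 / (2 * D) / (2 * Kl c D k l) \<le> time_factor_bound c D k" if "real l \<le> lstar c D k"
  proof -
    have "c\<^sup>2 / (2 * D) / (2 * Kl c D k l) \<le> (\<Sum>l\<le>?l0. c\<^sup>2 / (2 * D) / (2 * Kl c D k l))"
      using that terms_nonneg by (intro member_le_sum) (auto simp: low)
    then show ?thesis
      unfolding time_factor_bound_def using last_nonneg by linarith
  qed
  show "1 + c\<^sup>2 / (2 * D) / Kl' c D k l \<le> time_factor_bound c D k" if "real l > lstar c D k"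
  proof -
    have "Kl' c D k (Suc ?l0) \<le> Kl' c D k l"
      using that low[of l] by (intro Kl'_mono) simp
    then have "c\<^sup>2 / (2 * D) / Kl' c D k l \<le> c\<^sup>2 / (2 * D) / Kl' c D k (Suc ?l0)"
      using first_Kl'_pos assms by (intro divide_left_mono) auto
    moreover have "0 \<le> (\<Sum>l\<le>?l0. c\<^sup>2 / (2 * D) / (2 * Kl c D k l))"
      using terms_nonneg by (rule sum_nonneg)
    ultimately show ?thesis
      unfolding time_factor_bound_def by linarith
  qed
qed

lemma abs_time_factor_le_underdamped:
  assumes "c > 0" "D > 0" "k > 0" "real l > lstar c D k"
  shows "\<bar>Al c D k l t + Bl c D k l t\<bar> \<le> time_factor_bound c D k"
proof -
  define K where "K = Kl' c D k l"
  have "K > 0"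
    using Kl'_pos[OF assms] by (simp add: K_def)
  have "\<bar>Al c D k l t + Bl c D k l t\<bar> = \<bar>cos (t * K) + c\<^sup>2 / (2 * D) / K * sin (t * K)\<bar>"
    using assms(4) by (simp add: Al_def Bl_def K_def)
  also have "\<dots> \<le> 1 + c\<^sup>2 / (2 * D) / K"
  proof -
    have "0 \<le> c\<^sup>2 / (2 * D) / K"
      using \<open>K > 0\<close> assms by simp
    then have "\<bar>c\<^sup>2 / (2 * D) / K * sin (t * K)\<bar> \<le> c\<^sup>2 / (2 * D) / K * 1"
      unfolding abs_mult by (intro mult_mono abs_sin_le_one) auto
    then show ?thesis
      using abs_cos_le_one[of "t * K"] abs_triangle_ineq[of "cos (t * K)" "c\<^sup>2 / (2 * D) / K * sin (t * K)"]
      by linarith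
  qed
  also have "\<dots> \<le> time_factor_bound c D k"
    using time_factor_bound_ge(2)[OF assms(1-3) assms(4)] by (simp add: K_def)
  finally show ?thesis .
qed

lemma damped_time_factor_le_overdamped:
  assumes "c > 0" "D > 0" "k > 0" "real l \<le> lstar c D k" "t > 0"
  shows "exp (- (c\<^sup>2 * t) / (2 * D)) * \<bar>Al c D k l t + Bl c D k l t\<bar> \<le> time_factor_bound c D k"
proof -
  define a where "a = c\<^sup>2 / (2 * D)"
  define K where "K = Kl c D k l"
  have "a > 0" "0 \<le> K" "K \<le> a"
    using assms Kl_bounds[OF assms(1-4)] by (simp_all add: a_def K_def)
  have damping: "exp (- (c\<^sup>2 * t) / (2 * D)) = exp (- (a * t))"
    by (simp add: a_def)
  define S where "S = (if K = 0 then t else sinh (t * K) / K)"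
  have "S \<ge> 0"
    using \<open>0 \<le> K\<close> assms(5) by (simp add: S_def)
  have time_factor: "Al c D k l t + Bl c D k l t = cosh (t * K) + a * S"
    using assms(4) by (simp add: Al_def Bl_def K_def a_def S_def)
  have "exp (- (c\<^sup>2 * t) / (2 * D)) * \<bar>Al c D k l t + Bl c D k l t\<bar>
      = exp (- (a * t)) * cosh (t * K) + a * (exp (- (a * t)) * S)"
    unfolding damping time_factor using \<open>S \<ge> 0\<close> \<open>a > 0\<close> by (simp add: algebra_simps)
  also have "\<dots> \<le> 1 + (1 + a / (2 * K))"
  proof (intro add_mono)
    show "exp (- (a * t)) * cosh (t * K) \<le> 1"
      using \<open>0 \<le> K\<close> \<open>K \<le> a\<close> assms(5) by (intro exp_neg_mult_cosh_le_1) auto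
    show "a * (exp (- (a * t)) * S) \<le> 1 + a / (2 * K)"
    proof (cases "K = 0")
      case True
      then show ?thesis
        using mult_exp_neg_le_1[of "a * t"] by (simp add: S_def mult_ac)
    next
      case False
      then have "exp (- (a * t)) * S \<le> 1 / (2 * K)"
        using \<open>0 \<le> K\<close> \<open>K \<le> a\<close> assms(5) exp_neg_mult_sinh_le[of K a t] by (simp add: S_def)
      then have "a * (exp (- (a * t)) * S) \<le> a * (1 / (2 * K))"
        using \<open>a > 0\<close> by (intro mult_left_mono) auto
      then show ?thesis
        by simp
    qed
  qed
  also have "\<dots> \<le> time_factor_bound c D k"
    using time_factor_bound_ge(1)[OF assms(1-4)] by (simp add: a_def K_def)
  finally show ?thesis .
qed

lemma abs_damped_time_factor_le:
  assumes "c > 0" "D > 0" "k > 0" "t > 0"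
  shows "\<bar>exp (- (c\<^sup>2 * t) / (2 * D)) * (Al c D k l t + Bl c D k l t)\<bar> \<le> time_factor_bound c D k"
proof (cases "real l \<le> lstar c D k")
  case True
  then show ?thesis
    using damped_time_factor_le_overdamped[OF assms(1-3) True assms(4)] by (simp add: abs_mult)
next
  case False
  have "exp (- (c\<^sup>2 * t) / (2 * D)) \<le> 1"
    using assms by simp
  then have "\<bar>exp (- (c\<^sup>2 * t) / (2 * D)) * (Al c D k l t + Bl c D k l t)\<bar> \<le> \<bar>Al c D k l t + Bl c D k l t\<bar>"
    unfolding abs_mult by (intro mult_left_le_one_le) auto
  also have "\<dots> \<le> time_factor_bound c D k"
    using False assms by (intro abs_time_factor_le_underdamped) auto
  finally show ?thesis .
qed

lemma abs_damped_time_factor_le_underdamped: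
  assumes "c > 0" "D > 0" "k > 0" "real l > lstar c D k"
  shows "\<bar>exp (- (c\<^sup>2 * t) / (2 * D)) * (Al c D k l t + Bl c D k l t)\<bar>
    \<le> time_factor_bound c D k * exp (- (c\<^sup>2 * t) / (2 * D))"
  unfolding abs_mult abs_exp_cancel mult.commute[of _ "exp (- (c\<^sup>2 * t) / (2 * D))"]
  using abs_time_factor_le_underdamped[OF assms] by (intro mult_left_mono) auto

section \<open>Orthogonal sums and limits in L2\<close>

lemma integrable_mult_cnj:
  fixes X Y :: "'w \<Rightarrow> complex"
  assumes [measurable]: "X \<in> borel_measurable M" "Y \<in> borel_measurable M"
    and "integrable M (\<lambda>\<omega>. (cmod (X \<omega>))\<^sup>2)" "integrable M (\<lambda>\<omega>. (cmod (Y \<omega>))\<^sup>2)"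
  shows "integrable M (\<lambda>\<omega>. X \<omega> * cnj (Y \<omega>))"
proof (rule Bochner_Integration.integrable_bound)
  show "integrable M (\<lambda>\<omega>. (cmod (X \<omega>))\<^sup>2 + (cmod (Y \<omega>))\<^sup>2)"
    using assms(3,4) by simp
  have [measurable]: "(\<lambda>\<omega>. cnj (Y \<omega>)) \<in> borel_measurable M"
    by (rule borel_measurable_continuous_on[OF _ assms(2)]) (intro continuous_intros)
  show "(\<lambda>\<omega>. X \<omega> * cnj (Y \<omega>)) \<in> borel_measurable M"
    by measurable
  have "cmod (X \<omega>) * cmod (Y \<omega>) \<le> (cmod (X \<omega>))\<^sup>2 + (cmod (Y \<omega>))\<^sup>2" for \<omega>
    using sum_squares_bound[of "cmod (X \<omega>)" "cmod (Y \<omega>)"] mult_nonneg_nonneg[OF norm_ge_zero norm_ge_zero, of "X \<omega>" "Y \<omega>"]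
    unfolding power2_eq_square by linarith
  then show "AE \<omega> in M. norm (X \<omega> * cnj (Y \<omega>)) \<le> norm ((cmod (X \<omega>))\<^sup>2 + (cmod (Y \<omega>))\<^sup>2)"
    by (simp add: norm_mult)
qed

lemma orthogonal_sum_norm_sq:
  fixes X :: "'i \<Rightarrow> 'w \<Rightarrow> complex" and \<beta> :: "'i \<Rightarrow> complex" and \<sigma> :: "'i \<Rightarrow> real"
  assumes "finite I"
    and measurable: "\<And>p. p \<in> I \<Longrightarrow> X p \<in> borel_measurable M"
    and square_integrable: "\<And>p. p \<in> I \<Longrightarrow> integrable M (\<lambda>\<omega>. (cmod (X p \<omega>))\<^sup>2)"
    and orthogonal: "\<And>p q. p \<in> I \<Longrightarrow> q \<in> I \<Longrightarrow>
      (\<integral>\<omega>. X p \<omega> * cnj (X q \<omega>) \<partial>M) = (if p = q then complex_of_real (\<sigma> p) else 0)"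
  shows "integrable M (\<lambda>\<omega>. (cmod (\<Sum>p\<in>I. \<beta> p * X p \<omega>))\<^sup>2)"
    and "(\<integral>\<omega>. (cmod (\<Sum>p\<in>I. \<beta> p * X p \<omega>))\<^sup>2 \<partial>M) = (\<Sum>p\<in>I. (cmod (\<beta> p))\<^sup>2 * \<sigma> p)"
proof -
  define S where "S \<omega> = (\<Sum>p\<in>I. \<beta> p * X p \<omega>)" for \<omega>
  have norm_sq_S: "(cmod (S \<omega>))\<^sup>2 = Re (S \<omega> * cnj (S \<omega>))" for \<omega>
    by (simp flip: complex_norm_square)
  have expand: "S \<omega> * cnj (S \<omega>) = (\<Sum>p\<in>I. \<Sum>q\<in>I. \<beta> p * cnj (\<beta> q) * (X p \<omega> * cnj (X q \<omega>)))" for \<omega>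
    by (simp add: S_def sum_product algebra_simps)
  have products_integrable: "integrable M (\<lambda>\<omega>. \<beta> p * cnj (\<beta> q) * (X p \<omega> * cnj (X q \<omega>)))"
    if "p \<in> I" "q \<in> I" for p q
    using that by (intro integrable_mult_right integrable_mult_cnj measurable square_integrable)
  then have "integrable M (\<lambda>\<omega>. S \<omega> * cnj (S \<omega>))"
    unfolding expand by (intro Bochner_Integration.integrable_sum)
  then show "integrable M (\<lambda>\<omega>. (cmod (\<Sum>p\<in>I. \<beta> p * X p \<omega>))\<^sup>2)"
    unfolding S_def[symmetric] norm_sq_S by (rule integrable_Re)
  have "(\<integral>\<omega>. S \<omega> * cnj (S \<omega>) \<partial>M)
      = (\<Sum>p\<in>I. \<Sum>q\<in>I. \<beta> p * cnj (\<beta> q) * (\<integral>\<omega>. X p \<omega> * cnj (X q \<omega>) \<partial>M))"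
    unfolding expand using products_integrable
    by (simp add: Bochner_Integration.integral_sum Bochner_Integration.integrable_sum)
  also have "\<dots> = (\<Sum>p\<in>I. \<beta> p * cnj (\<beta> p) * complex_of_real (\<sigma> p))"
  proof (rule sum.cong[OF refl])
    fix p assume "p \<in> I"
    then have "(\<Sum>q\<in>I. \<beta> p * cnj (\<beta> q) * (\<integral>\<omega>. X p \<omega> * cnj (X q \<omega>) \<partial>M))
        = (\<Sum>q\<in>I. if p = q then \<beta> p * cnj (\<beta> p) * complex_of_real (\<sigma> p) else 0)"
      by (intro sum.cong refl) (simp add: orthogonal)
    then show "(\<Sum>q\<in>I. \<beta> p * cnj (\<beta> q) * (\<integral>\<omega>. X p \<omega> * cnj (X q \<omega>) \<partial>M))
        = \<beta> p * cnj (\<beta> p) * complex_of_real (\<sigma> p)"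
      using \<open>finite I\<close> \<open>p \<in> I\<close> by simp
  qed
  also have "\<dots> = complex_of_real (\<Sum>p\<in>I. (cmod (\<beta> p))\<^sup>2 * \<sigma> p)"
    by (simp flip: complex_norm_square)
  finally show "(\<integral>\<omega>. (cmod (\<Sum>p\<in>I. \<beta> p * X p \<omega>))\<^sup>2 \<partial>M) = (\<Sum>p\<in>I. (cmod (\<beta> p))\<^sup>2 * \<sigma> p)"
    unfolding S_def[symmetric] norm_sq_S integral_Re[OF \<open>integrable M (\<lambda>\<omega>. S \<omega> * cnj (S \<omega>))\<close>]
    by simp
qed

lemma norm_add_sq_le:
  fixes x y :: "'a :: real_normed_vector"
  assumes "e > 0"
  shows "(norm (x + y))\<^sup>2 \<le> (1 + e) * (norm x)\<^sup>2 + (1 + 1 / e) * (norm y)\<^sup>2"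
proof -
  have "(norm (x + y))\<^sup>2 \<le> (norm x + norm y)\<^sup>2"
    by (rule power_mono[OF norm_triangle_ineq]) simp
  also have "\<dots> = (1 + e) * (norm x)\<^sup>2 + (1 + 1 / e) * (norm y)\<^sup>2 - (e * norm x - norm y)\<^sup>2 / e"
    using assms by (simp add: field_simps power2_eq_square)
  also have "\<dots> \<le> (1 + e) * (norm x)\<^sup>2 + (1 + 1 / e) * (norm y)\<^sup>2"
    using assms by simp
  finally show ?thesis .
qed

lemma nn_integral_norm_sq_le_eps:
  fixes W V :: "'w \<Rightarrow> 'b :: {real_normed_vector, second_countable_topology}"
  assumes [measurable]: "W \<in> borel_measurable M" "V \<in> borel_measurable M" and "e > 0"
  shows "(\<integral>\<^sup>+\<omega>. ennreal ((norm (W \<omega>))\<^sup>2) \<partial>M)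
    \<le> ennreal (1 + e) * (\<integral>\<^sup>+\<omega>. ennreal ((norm (V \<omega>))\<^sup>2) \<partial>M)
      + ennreal (1 + 1 / e) * (\<integral>\<^sup>+\<omega>. ennreal ((norm (W \<omega> - V \<omega>))\<^sup>2) \<partial>M)"
proof -
  have "(\<integral>\<^sup>+\<omega>. ennreal ((norm (W \<omega>))\<^sup>2) \<partial>M)
      \<le> (\<integral>\<^sup>+\<omega>. ennreal (1 + e) * ennreal ((norm (V \<omega>))\<^sup>2)
                 + ennreal (1 + 1 / e) * ennreal ((norm (W \<omega> - V \<omega>))\<^sup>2) \<partial>M)"
  proof (rule nn_integral_mono)
    fix \<omega>
    have "(norm (W \<omega>))\<^sup>2 \<le> (1 + e) * (norm (V \<omega>))\<^sup>2 + (1 + 1 / e) * (norm (W \<omega> - V \<omega>))\<^sup>2"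
      using norm_add_sq_le[OF \<open>e > 0\<close>, of "V \<omega>" "W \<omega> - V \<omega>"] by simp
    then have "ennreal ((norm (W \<omega>))\<^sup>2)
        \<le> ennreal ((1 + e) * (norm (V \<omega>))\<^sup>2 + (1 + 1 / e) * (norm (W \<omega> - V \<omega>))\<^sup>2)"
      by (rule ennreal_leI)
    also have "\<dots> = ennreal (1 + e) * ennreal ((norm (V \<omega>))\<^sup>2)
                    + ennreal (1 + 1 / e) * ennreal ((norm (W \<omega> - V \<omega>))\<^sup>2)"
      using \<open>e > 0\<close> by (simp add: ennreal_mult')
    finally show "ennreal ((norm (W \<omega>))\<^sup>2) \<le> ennreal (1 + e) * ennreal ((norm (V \<omega>))\<^sup>2)
                    + ennreal (1 + 1 / e) * ennreal ((norm (W \<omega> - V \<omega>))\<^sup>2)" .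
  qed
  also have "\<dots> = ennreal (1 + e) * (\<integral>\<^sup>+\<omega>. ennreal ((norm (V \<omega>))\<^sup>2) \<partial>M)
      + ennreal (1 + 1 / e) * (\<integral>\<^sup>+\<omega>. ennreal ((norm (W \<omega> - V \<omega>))\<^sup>2) \<partial>M)"
    by (simp add: nn_integral_add nn_integral_cmult)
  finally show ?thesis .
qed

lemma L2_limit_norm_sq_le:
  fixes W :: "'w \<Rightarrow> 'b :: {real_normed_vector, second_countable_topology}"
    and V :: "nat \<Rightarrow> 'w \<Rightarrow> 'b"
  assumes [measurable]: "W \<in> borel_measurable M" "\<And>N. V N \<in> borel_measurable M"
    and L2_limit: "(\<lambda>N. \<integral>\<^sup>+\<omega>. ennreal ((norm (W \<omega> - V N \<omega>))\<^sup>2) \<partial>M) \<longlonglongrightarrow> 0"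
    and V_integrable: "\<And>N. N \<ge> L \<Longrightarrow> integrable M (\<lambda>\<omega>. (norm (V N \<omega>))\<^sup>2)"
    and V_bounded: "\<And>N. N \<ge> L \<Longrightarrow> (\<integral>\<omega>. (norm (V N \<omega>))\<^sup>2 \<partial>M) \<le> B"
  shows "integrable M (\<lambda>\<omega>. (norm (W \<omega>))\<^sup>2)" and "(\<integral>\<omega>. (norm (W \<omega>))\<^sup>2 \<partial>M) \<le> B"
proof -
  define I where "I = (\<integral>\<^sup>+\<omega>. ennreal ((norm (W \<omega>))\<^sup>2) \<partial>M)"
  define r where "r N = (\<integral>\<^sup>+\<omega>. ennreal ((norm (W \<omega> - V N \<omega>))\<^sup>2) \<partial>M)" for N
  have "0 \<le> (\<integral>\<omega>. (norm (V L \<omega>))\<^sup>2 \<partial>M)"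
    by (rule integral_nonneg_AE) simp
  then have "B \<ge> 0"
    using V_bounded[of L] by linarith
  have approx: "I \<le> ennreal (1 + e) * ennreal B + ennreal (1 + 1 / e) * r N" if "e > 0" "N \<ge> L" for e N
  proof -
    have "I \<le> ennreal (1 + e) * (\<integral>\<^sup>+\<omega>. ennreal ((norm (V N \<omega>))\<^sup>2) \<partial>M) + ennreal (1 + 1 / e) * r N"
      unfolding I_def r_def by (rule nn_integral_norm_sq_le_eps) (use that in auto)
    also have "(\<integral>\<^sup>+\<omega>. ennreal ((norm (V N \<omega>))\<^sup>2) \<partial>M) = ennreal (\<integral>\<omega>. (norm (V N \<omega>))\<^sup>2 \<partial>M)"
      using V_integrable[OF \<open>N \<ge> L\<close>] by (simp add: nn_integral_eq_integral)
    also have "\<dots> \<le> ennreal B"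
      using V_bounded[OF \<open>N \<ge> L\<close>] by (rule ennreal_leI)
    finally show ?thesis
      by (simp add: mult_left_mono)
  qed
  have I_le: "I \<le> ennreal ((1 + e) * B)" if "e > 0" for e
  proof -
    have "(\<lambda>N. ennreal (1 + e) * ennreal B + ennreal (1 + 1 / e) * r N)
        \<longlonglongrightarrow> ennreal (1 + e) * ennreal B + ennreal (1 + 1 / e) * 0"
      using L2_limit unfolding r_def[symmetric]
      by (intro tendsto_add tendsto_const ennreal_tendsto_cmult) auto
    moreover have "\<forall>\<^sub>F N in sequentially. I \<le> ennreal (1 + e) * ennreal B + ennreal (1 + 1 / e) * r N"
      using approx[OF that] by (intro eventually_sequentiallyI[of L])
    ultimately have "I \<le> ennreal (1 + e) * ennreal B + ennreal (1 + 1 / e) * 0"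
      by (rule tendsto_lowerbound) simp
    then show ?thesis
      using \<open>e > 0\<close> by (simp add: ennreal_mult')
  qed
  have "I < \<infinity>"
    using le_less_trans[OF I_le[OF zero_less_one] ennreal_less_top] by simp
  then show W_integrable: "integrable M (\<lambda>\<omega>. (norm (W \<omega>))\<^sup>2)"
    unfolding I_def by (intro integrableI_nonneg) auto
  have "(\<integral>\<omega>. (norm (W \<omega>))\<^sup>2 \<partial>M) \<le> (1 + e) * B" if "e > 0" for e
    using I_le[OF that] \<open>B \<ge> 0\<close> \<open>e > 0\<close>
    by (simp add: I_def nn_integral_eq_integral[OF W_integrable] ennreal_le_iff)
  moreover have "((\<lambda>e. (1 + e) * B) \<longlongrightarrow> (1 + 0) * B) (at_right 0)"
    by (intro tendsto_intros)
  ultimately show "(\<integral>\<omega>. (norm (W \<omega>))\<^sup>2 \<partial>M) \<le> B"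
    using eventually_at_right_less[of "0 :: real"]
    by (intro tendsto_lowerbound[of "\<lambda>e. (1 + e) * B" _ "at_right 0"]) (auto elim: eventually_mono)
qed

section \<open>The truncation error\<close>

lemma isotropic_gaussian_coeffsD:
  assumes "isotropic_gaussian_coeffs M a C"
  shows "\<And>l m. \<bar>m\<bar> \<le> int l \<Longrightarrow> a l m \<in> borel_measurable M"
    and "\<And>l m. \<bar>m\<bar> \<le> int l \<Longrightarrow> integrable M (\<lambda>\<omega>. (cmod (a l m \<omega>))\<^sup>2)"
    and "\<And>l m l' m'. \<bar>m\<bar> \<le> int l \<Longrightarrow> \<bar>m'\<bar> \<le> int l' \<Longrightarrow>
      (\<integral>\<omega>. a l m \<omega> * cnj (a l' m' \<omega>) \<partial>M) = (if l = l' \<and> m = m' then complex_of_real (C l) else 0)"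
    and "summable (\<lambda>l. (2 * real l + 1) * C l)"
  using assms unfolding isotropic_gaussian_coeffs_def by auto

lemma isotropic_gaussian_coeffs_variance_nonneg:
  assumes "isotropic_gaussian_coeffs M a C"
  shows "C l \<ge> 0"
proof -
  have "complex_of_real (C l) = (\<integral>\<omega>. a l 0 \<omega> * cnj (a l 0 \<omega>) \<partial>M)"
    using isotropic_gaussian_coeffsD(3)[OF assms, of 0 l 0 l] by simp
  also have "\<dots> = (\<integral>\<omega>. complex_of_real ((cmod (a l 0 \<omega>))\<^sup>2) \<partial>M)"
    by (simp only: complex_norm_square)
  also have "\<dots> = complex_of_real (\<integral>\<omega>. (cmod (a l 0 \<omega>))\<^sup>2 \<partial>M)"
    by (rule integral_complex_of_real)
  finally have "C l = (\<integral>\<omega>. (cmod (a l 0 \<omega>))\<^sup>2 \<partial>M)"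
    by simp
  also have "\<dots> \<ge> 0"
    by (rule integral_nonneg_AE) simp
  finally show ?thesis .
qed

abbreviation modes :: "nat \<Rightarrow> nat \<Rightarrow> (nat \<times> int) set" where
  "modes L N \<equiv> Sigma {L..<N} (\<lambda>l. {- int l..int l})"

definition mode_coeff :: "real \<Rightarrow> real \<Rightarrow> real \<Rightarrow> real \<Rightarrow> real \<Rightarrow> real \<Rightarrow> nat \<times> int \<Rightarrow> complex" where
  "mode_coeff c D k \<theta> \<phi> t p =
     complex_of_real (exp (- (c\<^sup>2 * t) / (2 * D))) * sph_harm (fst p) (snd p) \<theta> \<phi>
       * complex_of_real (sqrt (4 * pi / (2 * real (fst p) + 1))) * cnj (sph_harm (fst p) 0 0 0)
       * complex_of_real (Al c D k (fst p) t + Bl c D k (fst p) t)"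

lemma u_trunc_diff_eq_sum:
  assumes "L \<le> N"
  shows "u_trunc c D k a N \<theta> \<phi> t \<omega> - u_trunc c D k a L \<theta> \<phi> t \<omega>
     = (\<Sum>p\<in>modes L N. mode_coeff c D k \<theta> \<phi> t p * a (fst p) (snd p) \<omega>)"
proof -
  define E where "E = complex_of_real (exp (- (c\<^sup>2 * t) / (2 * D)))"
  define X where "X l = (\<Sum>m\<in>{- int l..int l}. sph_harm l m \<theta> \<phi> * xi_coef c D k a l m t \<omega>)" for l
  have "u_trunc c D k a N \<theta> \<phi> t \<omega> - u_trunc c D k a L \<theta> \<phi> t \<omega> = E * (sum X {..<N} - sum X {..<L})"
    by (simp add: u_trunc_def X_def E_def algebra_simps)
  also have "sum X {..<N} - sum X {..<L} = sum X {L..<N}"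
    using sum_diff_nat_ivl[of 0 L N X] assms by (simp add: lessThan_atLeast0)
  also have "E * sum X {L..<N} = (\<Sum>(l, m)\<in>modes L N. E * (sph_harm l m \<theta> \<phi> * xi_coef c D k a l m t \<omega>))"
    by (simp add: X_def sum_distrib_left sum.Sigma case_prod_beta)
  also have "\<dots> = (\<Sum>p\<in>modes L N. mode_coeff c D k \<theta> \<phi> t p * a (fst p) (snd p) \<omega>)"
    by (intro sum.cong refl) (auto simp: mode_coeff_def xi_coef_def E_def)
  finally show ?thesis .
qed

lemma u_trunc_measurable:
  assumes "isotropic_gaussian_coeffs M a C"
  shows "(\<lambda>\<omega>. u_trunc c D k a N \<theta> \<phi> t \<omega>) \<in> borel_measurable M"
proof -
  have "u_trunc c D k a N \<theta> \<phi> t \<omega> = (\<Sum>p\<in>modes 0 N. mode_coeff c D k \<theta> \<phi> t p * a (fst p) (snd p) \<omega>)" for \<omega>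
    using u_trunc_diff_eq_sum[of 0 N c D k a \<theta> \<phi> t \<omega>] by (simp add: u_trunc_def)
  moreover have "(\<lambda>\<omega>. \<Sum>p\<in>modes 0 N. mode_coeff c D k \<theta> \<phi> t p * a (fst p) (snd p) \<omega>) \<in> borel_measurable M"
    using isotropic_gaussian_coeffsD(1)[OF assms] by (intro borel_measurable_sum borel_measurable_times) auto
  ultimately show ?thesis
    by simp
qed

lemma norm_mode_coeff_sq:
  "(cmod (mode_coeff c D k \<theta> \<phi> t (l, m)))\<^sup>2
     = (exp (- (c\<^sup>2 * t) / (2 * D)) * (Al c D k l t + Bl c D k l t))\<^sup>2 * (cmod (sph_harm l m \<theta> \<phi>))\<^sup>2"
proof -
  have "(sqrt (4 * pi / (2 * real l + 1)))\<^sup>2 * (sqrt ((2 * real l + 1) / (4 * pi)))\<^sup>2 = 1"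
    by (simp add: add_pos_nonneg)
  then show ?thesis
    by (simp add: mode_coeff_def sph_harm_north_pole norm_mult power_mult_distrib mult_ac del: of_real_add)
qed

lemma u_trunc_increment_L2:
  assumes iso: "isotropic_gaussian_coeffs M a C" and "L \<le> N"
  shows "integrable M (\<lambda>\<omega>. (cmod (u_trunc c D k a N \<theta> \<phi> t \<omega> - u_trunc c D k a L \<theta> \<phi> t \<omega>))\<^sup>2)"
    and "(\<integral>\<omega>. (cmod (u_trunc c D k a N \<theta> \<phi> t \<omega> - u_trunc c D k a L \<theta> \<phi> t \<omega>))\<^sup>2 \<partial>M)
      = (\<Sum>l\<in>{L..<N}. (exp (- (c\<^sup>2 * t) / (2 * D)) * (Al c D k l t + Bl c D k l t))\<^sup>2
                        * ((2 * real l + 1) / (4 * pi)) * C l)"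
proof -
  have modes: "\<bar>snd p\<bar> \<le> int (fst p)" if "p \<in> modes L N" for p
    using that by auto
  have orthogonal: "(\<integral>\<omega>. a (fst p) (snd p) \<omega> * cnj (a (fst q) (snd q) \<omega>) \<partial>M)
      = (if p = q then complex_of_real (C (fst p)) else 0)" if "p \<in> modes L N" "q \<in> modes L N" for p q
    using isotropic_gaussian_coeffsD(3)[OF iso modes[OF that(1)] modes[OF that(2)]] by (simp add: prod_eq_iff)
  note orthogonal_sum = orthogonal_sum_norm_sq[where X = "\<lambda>p. a (fst p) (snd p)" and \<sigma> = "\<lambda>p. C (fst p)",
      OF _ isotropic_gaussian_coeffsD(1,2)[OF iso modes] orthogonal]
  show "integrable M (\<lambda>\<omega>. (cmod (u_trunc c D k a N \<theta> \<phi> t \<omega> - u_trunc c D k a L \<theta> \<phi> t \<omega>))\<^sup>2)"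
    unfolding u_trunc_diff_eq_sum[OF \<open>L \<le> N\<close>] by (rule orthogonal_sum(1)) simp
  have "(\<integral>\<omega>. (cmod (u_trunc c D k a N \<theta> \<phi> t \<omega> - u_trunc c D k a L \<theta> \<phi> t \<omega>))\<^sup>2 \<partial>M)
      = (\<Sum>p\<in>modes L N. (cmod (mode_coeff c D k \<theta> \<phi> t p))\<^sup>2 * C (fst p))"
    unfolding u_trunc_diff_eq_sum[OF \<open>L \<le> N\<close>] by (rule orthogonal_sum(2)) simp
  also have "\<dots> = (\<Sum>l\<in>{L..<N}. \<Sum>m\<in>{- int l..int l}. (cmod (mode_coeff c D k \<theta> \<phi> t (l, m)))\<^sup>2 * C l)"
    by (subst sum.Sigma) (auto simp: case_prod_beta)
  also have "\<dots> = (\<Sum>l\<in>{L..<N}. (exp (- (c\<^sup>2 * t) / (2 * D)) * (Al c D k l t + Bl c D k l t))\<^sup>2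
        * (\<Sum>m\<in>{- int l..int l}. (cmod (sph_harm l m \<theta> \<phi>))\<^sup>2) * C l)"
    by (simp add: norm_mode_coeff_sq sum_distrib_left sum_distrib_right)
  finally show "(\<integral>\<omega>. (cmod (u_trunc c D k a N \<theta> \<phi> t \<omega> - u_trunc c D k a L \<theta> \<phi> t \<omega>))\<^sup>2 \<partial>M)
      = (\<Sum>l\<in>{L..<N}. (exp (- (c\<^sup>2 * t) / (2 * D)) * (Al c D k l t + Bl c D k l t))\<^sup>2
                        * ((2 * real l + 1) / (4 * pi)) * C l)"
    by (simp only: sum_norm_sph_harm_sq)
qed

lemma u_trunc_increment_L2_le:
  assumes iso: "isotropic_gaussian_coeffs M a C" and "L \<le> N"
    and bound: "\<And>l. l \<ge> L \<Longrightarrow> \<bar>exp (- (c\<^sup>2 * t) / (2 * D)) * (Al c D k l t + Bl c D k l t)\<bar> \<le> \<rho>"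
  shows "(\<integral>\<omega>. (cmod (u_trunc c D k a N \<theta> \<phi> t \<omega> - u_trunc c D k a L \<theta> \<phi> t \<omega>))\<^sup>2 \<partial>M)
      \<le> \<rho>\<^sup>2 * (\<Sum>n. (2 * real (n + L) + 1) * C (n + L))"
proof -
  define h where "h l = (2 * real l + 1) * C l" for l
  have h_nonneg: "h l \<ge> 0" for l
    using isotropic_gaussian_coeffs_variance_nonneg[OF iso] by (simp add: h_def)
  have "(\<integral>\<omega>. (cmod (u_trunc c D k a N \<theta> \<phi> t \<omega> - u_trunc c D k a L \<theta> \<phi> t \<omega>))\<^sup>2 \<partial>M)
      = (\<Sum>l\<in>{L..<N}. (exp (- (c\<^sup>2 * t) / (2 * D)) * (Al c D k l t + Bl c D k l t))\<^sup>2 / (4 * pi) * h l)"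
    by (simp add: u_trunc_increment_L2(2)[OF iso \<open>L \<le> N\<close>] h_def mult_ac)
  also have "\<dots> \<le> (\<Sum>l\<in>{L..<N}. \<rho>\<^sup>2 * h l)"
  proof (intro sum_mono mult_right_mono h_nonneg)
    fix l assume "l \<in> {L..<N}"
    then have "\<bar>exp (- (c\<^sup>2 * t) / (2 * D)) * (Al c D k l t + Bl c D k l t)\<bar> \<le> \<rho>"
      by (intro bound) simp
    from power_mono[OF this abs_ge_zero, of 2]
    have "(exp (- (c\<^sup>2 * t) / (2 * D)) * (Al c D k l t + Bl c D k l t))\<^sup>2 \<le> \<rho>\<^sup>2"
      by simp
    moreover have "\<rho>\<^sup>2 * 1 \<le> \<rho>\<^sup>2 * (4 * pi)"
      using pi_gt3 by (intro mult_left_mono) auto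
    ultimately show "(exp (- (c\<^sup>2 * t) / (2 * D)) * (Al c D k l t + Bl c D k l t))\<^sup>2 / (4 * pi) \<le> \<rho>\<^sup>2"
      using pi_gt_zero by (simp add: divide_le_eq)
  qed
  also have "\<dots> = \<rho>\<^sup>2 * (\<Sum>n\<in>{0..<N - L}. h (n + L))"
  proof -
    have "{L..<N} = {0 + L..<(N - L) + L}"
      using \<open>L \<le> N\<close> by simp
    then show ?thesis
      by (simp only: sum_distrib_left[symmetric] sum.shift_bounds_nat_ivl)
  qed
  also have "\<dots> \<le> \<rho>\<^sup>2 * (\<Sum>n. h (n + L))"
  proof -
    have "summable h"
      using isotropic_gaussian_coeffsD(4)[OF iso] by (simp add: h_def[abs_def])
    then show ?thesis
      by (intro mult_left_mono sum_le_suminf summable_ignore_initial_segment) (auto simp: h_nonneg)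
  qed
  finally show ?thesis
    by (simp add: h_def)
qed

lemma truncation_error_L2_le:
  fixes u :: "'w \<Rightarrow> complex"
  assumes iso: "isotropic_gaussian_coeffs M a C"
    and [measurable]: "u \<in> borel_measurable M"
    and L2_limit: "(\<lambda>N. \<integral>\<^sup>+\<omega>. ennreal ((cmod (u \<omega> - u_trunc c D k a N \<theta> \<phi> t \<omega>))\<^sup>2) \<partial>M) \<longlonglongrightarrow> 0"
    and "\<rho> \<ge> 0"
    and bound: "\<And>l. l \<ge> L \<Longrightarrow> \<bar>exp (- (c\<^sup>2 * t) / (2 * D)) * (Al c D k l t + Bl c D k l t)\<bar> \<le> \<rho>"
  shows "integrable M (\<lambda>\<omega>. (cmod (u \<omega> - u_trunc c D k a L \<theta> \<phi> t \<omega>))\<^sup>2)"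
    and "sqrt (\<integral>\<omega>. (cmod (u \<omega> - u_trunc c D k a L \<theta> \<phi> t \<omega>))\<^sup>2 \<partial>M)
      \<le> \<rho> * sqrt (\<Sum>n. (2 * real (n + L) + 1) * C (n + L))"
proof -
  let ?S = "\<Sum>n. (2 * real (n + L) + 1) * C (n + L)"
  have [measurable]: "(\<lambda>\<omega>. u_trunc c D k a N \<theta> \<phi> t \<omega>) \<in> borel_measurable M" for N
    by (rule u_trunc_measurable[OF iso])
  note L2_bound = L2_limit_norm_sq_le[where W = "\<lambda>\<omega>. u \<omega> - u_trunc c D k a L \<theta> \<phi> t \<omega>"
      and V = "\<lambda>N \<omega>. u_trunc c D k a N \<theta> \<phi> t \<omega> - u_trunc c D k a L \<theta> \<phi> t \<omega>" and L = L and B = "\<rho>\<^sup>2 * ?S"]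
  show "integrable M (\<lambda>\<omega>. (cmod (u \<omega> - u_trunc c D k a L \<theta> \<phi> t \<omega>))\<^sup>2)"
    using L2_limit by (intro L2_bound(1) u_trunc_increment_L2(1)[OF iso] u_trunc_increment_L2_le[OF iso _ bound]) auto
  have "(\<integral>\<omega>. (cmod (u \<omega> - u_trunc c D k a L \<theta> \<phi> t \<omega>))\<^sup>2 \<partial>M) \<le> \<rho>\<^sup>2 * ?S"
    using L2_limit by (intro L2_bound(2) u_trunc_increment_L2(1)[OF iso] u_trunc_increment_L2_le[OF iso _ bound]) auto
  then have "sqrt (\<integral>\<omega>. (cmod (u \<omega> - u_trunc c D k a L \<theta> \<phi> t \<omega>))\<^sup>2 \<partial>M) \<le> sqrt (\<rho>\<^sup>2 * ?S)"
    by (rule real_sqrt_le_mono)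
  also have "\<dots> = \<rho> * sqrt ?S"
    using \<open>\<rho> \<ge> 0\<close> by (simp add: real_sqrt_mult)
  finally show "sqrt (\<integral>\<omega>. (cmod (u \<omega> - u_trunc c D k a L \<theta> \<phi> t \<omega>))\<^sup>2 \<partial>M) \<le> \<rho> * sqrt ?S" .
qed

theorem corollary1:
  fixes c D k :: real
  assumes "c > 0" and "D > 0" and "k > 0"
  shows "\<exists>Cst::real. \<forall>(M :: 'w measure) a Cl u L \<theta> \<phi> t.
     isotropic_gaussian_coeffs M a Cl \<longrightarrow>
     (\<forall>\<theta>' \<phi>' t'. u \<theta>' \<phi>' t' \<in> borel_measurable M \<and>
        ((\<lambda>N. \<integral>\<^sup>+ \<omega>. ennreal ((cmod (u \<theta>' \<phi>' t' \<omega> - u_trunc c D k a N \<theta>' \<phi>' t' \<omega>))\<^sup>2) \<partial>M)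
           \<longlonglongrightarrow> 0)) \<longrightarrow>
     0 \<le> \<theta> \<longrightarrow> \<theta> < pi \<longrightarrow> 0 \<le> \<phi> \<longrightarrow> \<phi> < 2 * pi \<longrightarrow> t > 0 \<longrightarrow>
     integrable M (\<lambda>\<omega>. (cmod (u \<theta> \<phi> t \<omega> - u_trunc c D k a L \<theta> \<phi> t \<omega>))\<^sup>2) \<and>
     sqrt (\<integral>\<omega>. (cmod (u \<theta> \<phi> t \<omega> - u_trunc c D k a L \<theta> \<phi> t \<omega>))\<^sup>2 \<partial>M)
       \<le> Cst * sqrt (\<Sum>n. (2 * real (n + L) + 1) * Cl (n + L)) \<and>
     (real L > lstar c D k \<longrightarrow>
       sqrt (\<integral>\<omega>. (cmod (u \<theta> \<phi> t \<omega> - u_trunc c D k a L \<theta> \<phi> t \<omega>))\<^sup>2 \<partial>M)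
         \<le> Cst * exp (- (c\<^sup>2 * t) / (2 * D)) * sqrt (\<Sum>n. (2 * real (n + L) + 1) * Cl (n + L)))"
proof (intro exI[of _ "time_factor_bound c D k"] allI impI conjI)
  fix M :: "'w measure" and a Cl u L \<theta> \<phi> and t :: real
  assume iso: "isotropic_gaussian_coeffs M a Cl"
    and u: "\<forall>\<theta>' \<phi>' t'. u \<theta>' \<phi>' t' \<in> borel_measurable M \<and>
        ((\<lambda>N. \<integral>\<^sup>+ \<omega>. ennreal ((cmod (u \<theta>' \<phi>' t' \<omega> - u_trunc c D k a N \<theta>' \<phi>' t' \<omega>))\<^sup>2) \<partial>M)
           \<longlonglongrightarrow> 0)"
    and "t > 0"
  note error = truncation_error_L2_le[OF iso u[rule_format, THEN conjunct1] u[rule_format, THEN conjunct2]]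
  note bound = abs_damped_time_factor_le[OF assms \<open>t > 0\<close>]
  have "0 \<le> time_factor_bound c D k"
    using bound[of 0] by (rule order_trans[OF abs_ge_zero])
  with bound show "integrable M (\<lambda>\<omega>. (cmod (u \<theta> \<phi> t \<omega> - u_trunc c D k a L \<theta> \<phi> t \<omega>))\<^sup>2)"
    and "sqrt (\<integral>\<omega>. (cmod (u \<theta> \<phi> t \<omega> - u_trunc c D k a L \<theta> \<phi> t \<omega>))\<^sup>2 \<partial>M)
      \<le> time_factor_bound c D k * sqrt (\<Sum>n. (2 * real (n + L) + 1) * Cl (n + L))"
    by (blast intro: error)+
  assume "real L > lstar c D k"
  with \<open>0 \<le> time_factor_bound c D k\<close> show "sqrt (\<integral>\<omega>. (cmod (u \<theta> \<phi> t \<omega> - u_trunc c D k a L \<theta> \<phi> t \<omega>))\<^sup>2 \<partial>M)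
      \<le> time_factor_bound c D k * exp (- (c\<^sup>2 * t) / (2 * D)) * sqrt (\<Sum>n. (2 * real (n + L) + 1) * Cl (n + L))"
    by (intro error(2) abs_damped_time_factor_le_underdamped[OF assms]) auto
qed

end
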